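(* Let $(G,M,\Delta)$ be a Garside structure and $(H,N,\delta)$ a parabolic substructure with $H\neq G$ and $H\ne\{1\}$. Put $\omega=\delta^{-1}\Delta$ and $\Phi(\alpha)=\Delta\alpha\Delta^{-1}$. For an integer $k\ge1$ let $d_k=\omega_1\omega_2\cdots\omega_k$, where $\omega_i=\Phi^{-i+1}(\omega)$ for $i\in\{1,\dots,k\}$. Then $\mathrm{diam}(\pi_H(d_k))\ge k$.
   Context: Let $G$ be a group and $M$ a submonoid with $M\cap M^{-1}=\{1\}$. Define $\alpha\le_L\beta$ iff $\alpha^{-1}\beta\in M$, and $\alpha\le_R\beta$ iff $\beta\alpha^{-1}\in M$. For $a\in M$ let $\mathrm{Div}_L(a)=\{b\in M: b\le_L a\}$, $\mathrm{Div}_R(a)=\{b\in M: b\le_R a\}$; $a$ is balanced if these coincide, and then $\mathrm{Div}(a)$ denotes this set. $M$ is Noetherian if each $a\in M$ admits an $n$ such that $a$ is not a product of more than $n$ non-trivial factors. A Garside structure $(G,M,\Delta)$: $\Delta\in M$ balanced, $M$ Noetherian, $\mathrm{Div}(\Delta)$ finite and generating $M$ as a monoid and $G$ as a group, $(G,\le_L)$ a lattice. A parabolic substructure $(H,N,\delta)$: $\delta\in M$ balanced, $H$ (resp. $N$) the subgroup (resp. submonoid) generated by $\mathrm{Div}(\delta)$, and $\mathrm{Div}(\delta)=\mathrm{Div}(\Delta)\cap N$. With $\mathcal S=\mathrm{Div}(\Delta)\setminus\{1\}$ and $\lg$ the word length w.r.t. $\mathcal S$: $d(\alpha,\beta)=\lg(\alpha^{-1}\beta)$;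 $d(\alpha,H)=\min_{\beta\in H}d(\alpha,\beta)$; $\pi_H(\alpha)=\{\beta\in H: d(\alpha,\beta)=d(\alpha,H)\}$; $\mathrm{diam}(X)=\max\{d(\alpha,\beta):\alpha,\beta\in X\}$. *)

theory Defs
  imports "HOL-Algebra.Algebra"
begin

definition lprod :: "('a, 'b) monoid_scheme \<Rightarrow> 'a list \<Rightarrow> 'a" where
  "lprod G xs = foldr (\<lambda>x y. x \<otimes>\<^bsub>G\<^esub> y) xs \<one>\<^bsub>G\<^esub>"

definition leL :: "('a, 'b) monoid_scheme \<Rightarrow> 'a set \<Rightarrow> 'a \<Rightarrow> 'a \<Rightarrow> bool" where
  "leL G M a b \<longleftrightarrow> inv\<^bsub>G\<^esub> a \<otimes>\<^bsub>G\<^esub> b \<in> M"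

definition leR :: "('a, 'b) monoid_scheme \<Rightarrow> 'a set \<Rightarrow> 'a \<Rightarrow> 'a \<Rightarrow> bool" where
  "leR G M a b \<longleftrightarrow> b \<otimes>\<^bsub>G\<^esub> inv\<^bsub>G\<^esub> a \<in> M"

definition DivL :: "('a, 'b) monoid_scheme \<Rightarrow> 'a set \<Rightarrow> 'a \<Rightarrow> 'a set" where
  "DivL G M a = {b \<in> M. leL G M b a}"

definition DivR :: "('a, 'b) monoid_scheme \<Rightarrow> 'a set \<Rightarrow> 'a \<Rightarrow> 'a set" where
  "DivR G M a = {b \<in> M. leR G M b a}"

definition balanced :: "('a, 'b) monoid_scheme \<Rightarrow> 'a set \<Rightarrow> 'a \<Rightarrow> bool" where
  "balanced G M a \<longleftrightarrow> a \<in> M \<and> DivL G M a = DivR G M a"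

(* Div(a), used for balanced a *)
definition Div :: "('a, 'b) monoid_scheme \<Rightarrow> 'a set \<Rightarrow> 'a \<Rightarrow> 'a set" where
  "Div G M a = DivL G M a"

inductive_set mgen :: "('a, 'b) monoid_scheme \<Rightarrow> 'a set \<Rightarrow> 'a set"
  for G and S where
    one: "\<one>\<^bsub>G\<^esub> \<in> mgen G S"
  | incl: "s \<in> S \<Longrightarrow> s \<in> mgen G S"
  | mult: "x \<in> mgen G S \<Longrightarrow> y \<in> mgen G S \<Longrightarrow> x \<otimes>\<^bsub>G\<^esub> y \<in> mgen G S"

definition is_submonoid :: "('a, 'b) monoid_scheme \<Rightarrow> 'a set \<Rightarrow> bool" where
  "is_submonoid G M \<longleftrightarrow> M \<subseteq> carrier G \<and> \<one>\<^bsub>G\<^esub> \<in> M \<and>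
     (\<forall>x\<in>M. \<forall>y\<in>M. x \<otimes>\<^bsub>G\<^esub> y \<in> M)"

definition noetherian :: "('a, 'b) monoid_scheme \<Rightarrow> 'a set \<Rightarrow> bool" where
  "noetherian G M \<longleftrightarrow> (\<forall>a\<in>M. \<exists>n::nat. \<not> (\<exists>xs. length xs > n \<and>
      set xs \<subseteq> M - {\<one>\<^bsub>G\<^esub>} \<and> lprod G xs = a))"

definition is_lattice_L :: "('a, 'b) monoid_scheme \<Rightarrow> 'a set \<Rightarrow> bool" where
  "is_lattice_L G M \<longleftrightarrow> (\<forall>a\<in>carrier G. \<forall>b\<in>carrier G.
     (\<exists>m\<in>carrier G. leL G M m a \<and> leL G M m b \<and>
        (\<forall>c\<in>carrier G. leL G M c a \<and> leL G M c b \<longrightarrow> leL G M c m)) \<and>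
     (\<exists>j\<in>carrier G. leL G M a j \<and> leL G M b j \<and>
        (\<forall>c\<in>carrier G. leL G M a c \<and> leL G M b c \<longrightarrow> leL G M j c)))"

(* Garside structure (G, M, Delta), including the standing assumptions on M *)
definition garside :: "('a, 'b) monoid_scheme \<Rightarrow> 'a set \<Rightarrow> 'a \<Rightarrow> bool" where
  "garside G M \<Delta> \<longleftrightarrow> group G \<and> is_submonoid G M \<and>
     M \<inter> (m_inv G ` M) = {\<one>\<^bsub>G\<^esub>} \<and>
     balanced G M \<Delta> \<and> noetherian G M \<and> finite (Div G M \<Delta>) \<and>
     mgen G (Div G M \<Delta>) = M \<and> generate G (Div G M \<Delta>) = carrier G \<and>
     is_lattice_L G M"

definition parabolic :: "('a, 'b) monoid_scheme \<Rightarrow> 'a set \<Rightarrow> 'a \<Rightarrow> 'a set \<Rightarrow> 'a set \<Rightarrow> 'a \<Rightarrow> bool" where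
  "parabolic G M \<Delta> H N \<delta> \<longleftrightarrow> \<delta> \<in> M \<and> balanced G M \<delta> \<and>
     H = generate G (Div G M \<delta>) \<and> N = mgen G (Div G M \<delta>) \<and>
     Div G M \<delta> = Div G M \<Delta> \<inter> N"

definition gens :: "('a, 'b) monoid_scheme \<Rightarrow> 'a set \<Rightarrow> 'a \<Rightarrow> 'a set" where
  "gens G M \<Delta> = Div G M \<Delta> - {\<one>\<^bsub>G\<^esub>}"

definition wlen :: "('a, 'b) monoid_scheme \<Rightarrow> 'a set \<Rightarrow> 'a \<Rightarrow> 'a \<Rightarrow> nat" where
  "wlen G M \<Delta> x = (LEAST n. \<exists>xs. length xs = n \<and>
      set xs \<subseteq> gens G M \<Delta> \<union> m_inv G ` gens G M \<Delta> \<and> lprod G xs = x)"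

definition gdist :: "('a, 'b) monoid_scheme \<Rightarrow> 'a set \<Rightarrow> 'a \<Rightarrow> 'a \<Rightarrow> 'a \<Rightarrow> nat" where
  "gdist G M \<Delta> a b = wlen G M \<Delta> (inv\<^bsub>G\<^esub> a \<otimes>\<^bsub>G\<^esub> b)"

definition setdist :: "('a, 'b) monoid_scheme \<Rightarrow> 'a set \<Rightarrow> 'a \<Rightarrow> 'a \<Rightarrow> 'a set \<Rightarrow> nat" where
  "setdist G M \<Delta> a H = (LEAST n. \<exists>b\<in>H. gdist G M \<Delta> a b = n)"

definition proj :: "('a, 'b) monoid_scheme \<Rightarrow> 'a set \<Rightarrow> 'a \<Rightarrow> 'a set \<Rightarrow> 'a \<Rightarrow> 'a set" where
  "proj G M \<Delta> H a = {b \<in> H. gdist G M \<Delta> a b = setdist G M \<Delta> a H}"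

(* diam X = max of distances (X is finite in the application) *)
definition diam :: "('a, 'b) monoid_scheme \<Rightarrow> 'a set \<Rightarrow> 'a \<Rightarrow> 'a set \<Rightarrow> nat" where
  "diam G M \<Delta> Y = Max ((\<lambda>(a, b). gdist G M \<Delta> a b) ` (Y \<times> Y))"

definition Phi_pow :: "('a, 'b) monoid_scheme \<Rightarrow> 'a \<Rightarrow> int \<Rightarrow> 'a \<Rightarrow> 'a" where
  "Phi_pow G \<Delta> m a = \<Delta> [^]\<^bsub>G\<^esub> m \<otimes>\<^bsub>G\<^esub> a \<otimes>\<^bsub>G\<^esub> \<Delta> [^]\<^bsub>G\<^esub> (- m)"

definition omega_i :: "('a, 'b) monoid_scheme \<Rightarrow> 'a \<Rightarrow> 'a \<Rightarrow> nat \<Rightarrow> 'a" where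
  "omega_i G \<Delta> \<omega> i = Phi_pow G \<Delta> (- int i + 1) \<omega>"

definition dk :: "('a, 'b) monoid_scheme \<Rightarrow> 'a \<Rightarrow> 'a \<Rightarrow> nat \<Rightarrow> 'a" where
  "dk G \<Delta> \<omega> k = lprod G (map (omega_i G \<Delta> \<omega>) [1..<k+1])"

end

theory Submission
  imports Defs
begin

(* The product telescopes: d_k = \<delta>^-k \<Delta>^k. Since \<Delta> s \<in> M for every
   generator s and conjugation by \<Delta> preserves M, an element x of word length n satisfies
   \<Delta>^n x \<in> M. Hence a point b \<in> H at distance j < k from d_k would give
   \<Delta>^-(k-j) \<delta>^k b \<in> M, forcing \<Delta> to divide an element of N and so H = G. Thus
   d(d_k, H) = k, attained at 1 (d_k is a product of k simple elements) and at \<delta>^-k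
   (d_k^-1 \<delta>^-k = \<Delta>^-k). Finally d(1, \<delta>^-k) \<ge> k, since \<Delta>^(k-1) \<delta>^-k \<notin> M when
   \<delta> \<noteq> 1. Both non-membership facts rest on one lattice property of the parabolic
   submonoid: a common left divisor of \<Delta> and of an element of N divides \<delta>. *)

lemma (in group) inv_mult_cancel_simps [simp]:
  "x \<in> carrier G \<Longrightarrow> y \<in> carrier G \<Longrightarrow> x \<otimes> (inv x \<otimes> y) = y"
  "x \<in> carrier G \<Longrightarrow> y \<in> carrier G \<Longrightarrow> inv x \<otimes> (x \<otimes> y) = y"
  by (simp_all add: m_assoc [symmetric])

context monoid
begin

lemma lprod_Nil [simp]: "lprod G [] = \<one>"
  by (simp add: lprod_def)

lemma lprod_Cons [simp]: "lprod G (x # xs) = x \<otimes> lprod G xs"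
  by (simp add: lprod_def)

lemma lprod_closed [simp]: "set xs \<subseteq> carrier G \<Longrightarrow> lprod G xs \<in> carrier G"
  by (induction xs) auto

lemma lprod_append:
  "set xs \<subseteq> carrier G \<Longrightarrow> set ys \<subseteq> carrier G \<Longrightarrow> lprod G (xs @ ys) = lprod G xs \<otimes> lprod G ys"
  by (induction xs) (auto simp: m_assoc)

lemma lprod_replicate: "x \<in> carrier G \<Longrightarrow> lprod G (replicate n x) = x [^] n"
  by (induction n) (simp_all add: nat_pow_Suc2 [symmetric])

lemma lprod_filter_one:
  "set xs \<subseteq> carrier G \<Longrightarrow> lprod G (filter (\<lambda>x. x \<noteq> \<one>) xs) = lprod G xs"
  by (induction xs) auto

lemma mgen_closed: "x \<in> mgen G S \<Longrightarrow> S \<subseteq> carrier G \<Longrightarrow> x \<in> carrier G"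
  by (induction rule: mgen.induct) auto

lemma lprod_in_mgen: "set xs \<subseteq> S \<Longrightarrow> lprod G xs \<in> mgen G S"
  by (induction xs) (auto intro: mgen.intros)

lemma mgen_lprod:
  assumes "x \<in> mgen G S" "S \<subseteq> carrier G"
  obtains xs where "set xs \<subseteq> S" "lprod G xs = x"
proof -
  from assms have "\<exists>xs. set xs \<subseteq> S \<and> lprod G xs = x"
  proof (induction rule: mgen.induct)
    case one
    show ?case by (rule exI[of _ "[]"]) simp
  next
    case (incl s)
    then show ?case by (intro exI[of _ "[s]"]) auto
  next
    case (mult x y)
    then obtain xs ys where "set xs \<subseteq> S" "lprod G xs = x" "set ys \<subseteq> S" "lprod G ys = y"
      by blast
    with mult.prems show ?case
      by (intro exI[of _ "xs @ ys"]) (auto simp: lprod_append)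
  qed
  with that show ?thesis by blast
qed

end

lemma mgen_minimal:
  assumes "is_submonoid G M" "S \<subseteq> M"
  shows "mgen G S \<subseteq> M"
proof
  fix x assume "x \<in> mgen G S"
  then show "x \<in> M"
    using assms by (induction rule: mgen.induct) (auto simp: is_submonoid_def)
qed

context group
begin

lemma inv_lprod: "set xs \<subseteq> carrier G \<Longrightarrow> inv (lprod G xs) = lprod G (rev (map (m_inv G) xs))"
proof (induction xs)
  case (Cons x xs)
  have "set (rev (map (m_inv G) xs)) \<subseteq> carrier G"
    using Cons.prems by auto
  with Cons show ?case
    by (simp add: inv_mult_group lprod_append)
qed simp

lemma generate_lprod:
  assumes "x \<in> generate G S" "S \<subseteq> carrier G"
  obtains xs where "set xs \<subseteq> S \<union> m_inv G ` S" "lprod G xs = x"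
proof -
  from assms have "\<exists>xs. set xs \<subseteq> S \<union> m_inv G ` S \<and> lprod G xs = x"
  proof (induction rule: generate.induct)
    case one
    show ?case by (rule exI[of _ "[]"]) simp
  next
    case (incl h)
    then show ?case by (intro exI[of _ "[h]"]) auto
  next
    case (inv h)
    then show ?case by (intro exI[of _ "[inv h]"]) auto
  next
    case (eng h1 h2)
    then obtain xs ys where "set xs \<subseteq> S \<union> m_inv G ` S" "lprod G xs = h1"
      "set ys \<subseteq> S \<union> m_inv G ` S" "lprod G ys = h2"
      by blast
    moreover have "S \<union> m_inv G ` S \<subseteq> carrier G"
      using eng.prems by auto
    ultimately show ?case
      by (intro exI[of _ "xs @ ys"]) (simp add: lprod_append subset_trans)
  qed
  with that show ?thesis by blast
qed

lemma set_filter_one_subset: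
  assumes "set xs \<subseteq> S \<union> m_inv G ` S" "S \<subseteq> carrier G"
  shows "set (filter (\<lambda>x. x \<noteq> \<one>) xs) \<subseteq> (S - {\<one>}) \<union> m_inv G ` (S - {\<one>})"
proof
  fix y assume "y \<in> set (filter (\<lambda>x. x \<noteq> \<one>) xs)"
  then have y: "y \<in> S \<union> m_inv G ` S" "y \<noteq> \<one>"
    using assms(1) by auto
  show "y \<in> (S - {\<one>}) \<union> m_inv G ` (S - {\<one>})"
  proof (cases "y \<in> S")
    case False
    with y obtain t where "t \<in> S" "y = inv t"
      by blast
    with y(2) show ?thesis
      by auto
  qed (use y in simp)
qed

lemma mgen_conj_closed:
  assumes "S \<subseteq> carrier G" "e \<in> carrier G" "\<And>t. t \<in> S \<Longrightarrow> e \<otimes> t \<otimes> inv e \<in> S"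
    and "x \<in> mgen G S"
  shows "e \<otimes> x \<otimes> inv e \<in> mgen G S"
  using assms(4)
proof (induction rule: mgen.induct)
  case one
  show ?case using assms(2) by (simp add: mgen.one)
next
  case (incl s)
  then show ?case using assms(3) by (simp add: mgen.incl)
next
  case (mult x y)
  have "x \<in> carrier G" "y \<in> carrier G"
    using mult.hyps mgen_closed assms(1) by auto
  then have "e \<otimes> (x \<otimes> y) \<otimes> inv e = (e \<otimes> x \<otimes> inv e) \<otimes> (e \<otimes> y \<otimes> inv e)"
    using assms(2) by (simp add: m_assoc)
  with mult.IH show ?case by (simp add: mgen.mult)
qed

lemma conj_pow_closed:
  assumes "K \<subseteq> carrier G" "e \<in> carrier G" "\<And>x. x \<in> K \<Longrightarrow> e \<otimes> x \<otimes> inv e \<in> K"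
    and "x \<in> K"
  shows "e [^] (n::nat) \<otimes> x \<otimes> inv (e [^] n) \<in> K"
proof (induction n)
  case 0
  show ?case using assms(1,4) by auto
next
  case (Suc n)
  have "e [^] Suc n \<otimes> x \<otimes> inv (e [^] Suc n) = e \<otimes> (e [^] n \<otimes> x \<otimes> inv (e [^] n)) \<otimes> inv e"
    using assms(1,2,4) by (auto simp only: nat_pow_Suc2 inv_mult_group m_assoc nat_pow_closed
        inv_closed m_closed subsetD)
  with Suc assms(3) show ?case by simp
qed

lemma conj_inv_pow_closed:
  assumes "K \<subseteq> carrier G" "e \<in> carrier G" "\<And>x. x \<in> K \<Longrightarrow> inv e \<otimes> x \<otimes> e \<in> K"
    and "x \<in> K"
  shows "inv (e [^] (n::nat)) \<otimes> x \<otimes> e [^] n \<in> K"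
  using conj_pow_closed[of K "inv e" x n] assms by (simp add: nat_pow_inv)

lemma omega_i_Suc:
  "\<Delta> \<in> carrier G \<Longrightarrow> omega_i G \<Delta> \<omega> (Suc i) = inv (\<Delta> [^] i) \<otimes> \<omega> \<otimes> \<Delta> [^] i"
  by (simp add: omega_i_def Phi_pow_def int_pow_neg_int int_pow_int)

lemma omega_i_closed: "\<Delta> \<in> carrier G \<Longrightarrow> \<omega> \<in> carrier G \<Longrightarrow> omega_i G \<Delta> \<omega> i \<in> carrier G"
  by (simp add: omega_i_def Phi_pow_def)

lemma dk_Suc:
  assumes "\<Delta> \<in> carrier G" "\<omega> \<in> carrier G"
  shows "dk G \<Delta> \<omega> (Suc k) = dk G \<Delta> \<omega> k \<otimes> omega_i G \<Delta> \<omega> (Suc k)"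
proof -
  have "[1..<Suc k + 1] = [1..<k + 1] @ [Suc k]"
    by simp
  then show ?thesis
    using omega_i_closed[OF assms] by (simp add: dk_def lprod_append image_subset_iff)
qed

lemma dk_eq:
  assumes "\<Delta> \<in> carrier G" "\<omega> \<in> carrier G"
  shows "dk G \<Delta> \<omega> k = (\<omega> \<otimes> inv \<Delta>) [^] k \<otimes> \<Delta> [^] k"
proof (induction k)
  case 0
  show ?case by (simp add: dk_def)
next
  case (Suc k)
  have "dk G \<Delta> \<omega> (Suc k) = dk G \<Delta> \<omega> k \<otimes> omega_i G \<Delta> \<omega> (Suc k)"
    using assms by (rule dk_Suc)
  also have "\<dots> = (\<omega> \<otimes> inv \<Delta>) [^] k \<otimes> (\<omega> \<otimes> inv \<Delta>) \<otimes> (\<Delta> \<otimes> \<Delta> [^] k)"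
    using assms by (simp add: Suc.IH omega_i_Suc m_assoc)
  also have "\<dots> = (\<omega> \<otimes> inv \<Delta>) [^] Suc k \<otimes> \<Delta> [^] Suc k"
    using assms by (simp only: nat_pow_Suc[of "\<omega> \<otimes> inv \<Delta>"] nat_pow_Suc2[OF assms(1)])
  finally show ?case .
qed

end

locale positive_cone = group G for G (structure) +
  fixes M :: "'a set"
  assumes submonoid: "is_submonoid G M"
    and pointed: "M \<inter> m_inv G ` M = {\<one>}"
begin

abbreviation left_le :: "'a \<Rightarrow> 'a \<Rightarrow> bool" (infix "\<preceq>" 50)
  where "a \<preceq> b \<equiv> leL G M a b"

lemma M_subset_carrier: "M \<subseteq> carrier G"
  using submonoid by (simp add: is_submonoid_def)

lemma M_closed [simp]: "x \<in> M \<Longrightarrow> x \<in> carrier G"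
  using M_subset_carrier by blast

lemma one_in_M [simp]: "\<one> \<in> M"
  using submonoid by (simp add: is_submonoid_def)

lemma mult_in_M [simp]: "x \<in> M \<Longrightarrow> y \<in> M \<Longrightarrow> x \<otimes> y \<in> M"
  using submonoid by (simp add: is_submonoid_def)

lemma pow_in_M [simp]: "x \<in> M \<Longrightarrow> x [^] (n::nat) \<in> M"
  by (induction n) auto

lemma inv_in_M_imp_one: "x \<in> M \<Longrightarrow> inv x \<in> M \<Longrightarrow> x = \<one>"
  using pointed by (metis IntI M_closed image_eqI inv_inv singletonD)

lemma left_le_refl: "a \<in> carrier G \<Longrightarrow> a \<preceq> a"
  by (simp add: leL_def)

lemma left_le_trans:
  assumes "a \<in> carrier G" "b \<in> carrier G" "c \<in> carrier G" "a \<preceq> b" "b \<preceq> c"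
  shows "a \<preceq> c"
proof -
  have "inv a \<otimes> c = (inv a \<otimes> b) \<otimes> (inv b \<otimes> c)"
    using assms(1-3) by (simp add: m_assoc)
  with assms(4,5) show ?thesis by (simp add: leL_def)
qed

lemma left_le_mult_right: "a \<in> carrier G \<Longrightarrow> m \<in> M \<Longrightarrow> a \<preceq> a \<otimes> m"
  by (simp add: leL_def)

lemma left_le_cancel:
  "s \<in> carrier G \<Longrightarrow> a \<in> carrier G \<Longrightarrow> b \<in> carrier G \<Longrightarrow> s \<otimes> a \<preceq> s \<otimes> b \<longleftrightarrow> a \<preceq> b"
  by (simp add: leL_def inv_mult_group m_assoc)

lemma Div_iff: "t \<in> Div G M e \<longleftrightarrow> t \<in> M \<and> t \<preceq> e"
  by (simp add: Div_def DivL_def)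

lemma Div_subset_M: "Div G M e \<subseteq> M"
  by (auto simp: Div_iff)

lemma Div_closed: "Div G M e \<subseteq> carrier G"
  using Div_subset_M M_closed by blast

lemma mgen_Div_subset_M: "mgen G (Div G M e) \<subseteq> M"
  by (rule mgen_minimal[OF submonoid Div_subset_M])

lemma self_in_Div: "e \<in> M \<Longrightarrow> e \<in> Div G M e"
  by (simp add: Div_iff left_le_refl)

lemma Div_iff_right: "balanced G M e \<Longrightarrow> t \<in> Div G M e \<longleftrightarrow> t \<in> M \<and> e \<otimes> inv t \<in> M"
  by (simp add: Div_def balanced_def DivR_def leR_def)

context
  fixes e assumes balanced: "balanced G M e"
begin

lemma balanced_in_M: "e \<in> M"
  using balanced by (simp add: balanced_def)

lemma Div_right_complement: "t \<in> Div G M e \<Longrightarrow> e \<otimes> inv t \<in> Div G M e"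
  using balanced_in_M Div_iff_right[OF balanced, of t]
  by (simp add: Div_iff leL_def inv_mult_group m_assoc)

lemma Div_left_complement: "t \<in> Div G M e \<Longrightarrow> inv t \<otimes> e \<in> Div G M e"
  using balanced_in_M Div_iff_right[OF balanced, of "inv t \<otimes> e"]
  by (simp add: Div_iff leL_def inv_mult_group m_assoc)

lemma Div_conj:
  assumes "t \<in> Div G M e"
  shows "e \<otimes> t \<otimes> inv e \<in> Div G M e"
proof -
  have "t \<in> carrier G" "e \<in> carrier G"
    using assms Div_closed balanced_in_M by auto
  then have "e \<otimes> inv (e \<otimes> inv t) = e \<otimes> t \<otimes> inv e"
    by (simp add: inv_mult_group m_assoc)
  with Div_right_complement[OF Div_right_complement[OF assms]] show ?thesis
    by simp
qed

lemma Div_conj_inv: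
  assumes "t \<in> Div G M e"
  shows "inv e \<otimes> t \<otimes> e \<in> Div G M e"
proof -
  have "t \<in> carrier G" "e \<in> carrier G"
    using assms Div_closed balanced_in_M by auto
  then have "inv (inv t \<otimes> e) \<otimes> e = inv e \<otimes> t \<otimes> e"
    by (simp add: inv_mult_group m_assoc)
  with Div_left_complement[OF Div_left_complement[OF assms]] show ?thesis
    by simp
qed

lemma mgen_Div_conj:
  "x \<in> mgen G (Div G M e) \<Longrightarrow> e \<otimes> x \<otimes> inv e \<in> mgen G (Div G M e)"
  using mgen_conj_closed[OF Div_closed] balanced_in_M Div_conj by simp

lemma mgen_Div_conj_inv:
  "x \<in> mgen G (Div G M e) \<Longrightarrow> inv e \<otimes> x \<otimes> e \<in> mgen G (Div G M e)"
  using mgen_conj_closed[OF Div_closed, of "inv e"] balanced_in_M Div_conj_inv by simp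

end

end

lemma setdist_eqI:
  assumes "b \<in> H" "gdist G M \<Delta> a b = n" "\<And>b'. b' \<in> H \<Longrightarrow> n \<le> gdist G M \<Delta> a b'"
  shows "setdist G M \<Delta> a H = n"
  unfolding setdist_def
proof (rule Least_equality)
  show "\<exists>b\<in>H. gdist G M \<Delta> a b = n"
    using assms(1,2) by blast
qed (use assms(3) in blast)

lemma gdist_le_diam:
  "finite Y \<Longrightarrow> a \<in> Y \<Longrightarrow> b \<in> Y \<Longrightarrow> gdist G M \<Delta> a b \<le> diam G M \<Delta> Y"
  unfolding diam_def by (rule Max_ge) auto

locale garside_structure = group G for G (structure) +
  fixes M :: "'a set" and \<Delta> :: 'a
  assumes garside: "garside G M \<Delta>"

sublocale garside_structure \<subseteq> positive_cone
  using garside by unfold_locales (simp_all add: garside_def)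

context garside_structure
begin

lemma Delta_balanced: "balanced G M \<Delta>"
  using garside by (simp add: garside_def)

lemma Delta_in_M [simp]: "\<Delta> \<in> M"
  using Delta_balanced by (simp add: balanced_def)

lemma Delta_closed [simp]: "\<Delta> \<in> carrier G"
  by simp

lemma mgen_Div_Delta: "mgen G (Div G M \<Delta>) = M"
  using garside by (simp add: garside_def)

lemma generate_Div_Delta: "generate G (Div G M \<Delta>) = carrier G"
  using garside by (simp add: garside_def)

lemma finite_Div_Delta: "finite (Div G M \<Delta>)"
  using garside by (simp add: garside_def)

lemma join_exists:
  assumes "a \<in> carrier G" "b \<in> carrier G"
  obtains j where "j \<in> carrier G" "a \<preceq> j" "b \<preceq> j"
    "\<And>c. c \<in> carrier G \<Longrightarrow> a \<preceq> c \<Longrightarrow> b \<preceq> c \<Longrightarrow> j \<preceq> c"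
proof -
  have "is_lattice_L G M"
    using garside by (simp add: garside_def)
  from bspec[OF bspec[OF this[unfolded is_lattice_L_def] assms(1)] assms(2)] that
  show ?thesis by blast
qed

lemma M_conj_Delta: "x \<in> M \<Longrightarrow> \<Delta> \<otimes> x \<otimes> inv \<Delta> \<in> M"
  using mgen_Div_conj[OF Delta_balanced] unfolding mgen_Div_Delta .

lemma M_conj_inv_Delta: "x \<in> M \<Longrightarrow> inv \<Delta> \<otimes> x \<otimes> \<Delta> \<in> M"
  using mgen_Div_conj_inv[OF Delta_balanced] unfolding mgen_Div_Delta .

lemma M_conj_Delta_pow: "x \<in> M \<Longrightarrow> \<Delta> [^] (n::nat) \<otimes> x \<otimes> inv (\<Delta> [^] n) \<in> M"
  using conj_pow_closed[OF M_subset_carrier Delta_closed M_conj_Delta] .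

lemma Div_Delta_conj_inv_Delta_pow:
  "t \<in> Div G M \<Delta> \<Longrightarrow> inv (\<Delta> [^] (n::nat)) \<otimes> t \<otimes> \<Delta> [^] n \<in> Div G M \<Delta>"
  using conj_inv_pow_closed[OF Div_closed Delta_closed Div_conj_inv[OF Delta_balanced]] .

lemma Delta_le_mult_Delta: "x \<in> M \<Longrightarrow> \<Delta> \<preceq> x \<otimes> \<Delta>"
  using M_conj_inv_Delta[of x] by (simp add: leL_def m_assoc)

(* The witness is x^-1 (x \<or> c): the join lies below both x y and x \<Delta>. *)
lemma le_mult_through_Delta_divisor:
  assumes "x \<in> M" "y \<in> M" "c \<in> carrier G" "c \<preceq> \<Delta>" "c \<preceq> x \<otimes> y"
  obtains z where "z \<in> carrier G" "z \<preceq> \<Delta>" "z \<preceq> y" "c \<preceq> x \<otimes> z"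
proof -
  obtain j where j: "j \<in> carrier G" "x \<preceq> j" "c \<preceq> j"
    and j_least: "\<And>c'. c' \<in> carrier G \<Longrightarrow> x \<preceq> c' \<Longrightarrow> c \<preceq> c' \<Longrightarrow> j \<preceq> c'"
    using join_exists[of x c] assms(1,3) by auto
  define z where "z = inv x \<otimes> j"
  have z: "z \<in> carrier G" "x \<otimes> z = j"
    using assms(1) j(1) by (simp_all add: z_def)
  have "j \<preceq> x \<otimes> y"
    using j_least assms left_le_mult_right by simp
  moreover have "c \<preceq> x \<otimes> \<Delta>"
    using left_le_trans[OF _ _ _ assms(4) Delta_le_mult_Delta] assms(1,3) by simp
  then have "j \<preceq> x \<otimes> \<Delta>"
    using j_least assms(1) left_le_mult_right by simp
  ultimately have "z \<preceq> y" "z \<preceq> \<Delta>"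
    using left_le_cancel[of x z] z assms(1,2) by auto
  with z j(3) that show ?thesis by blast
qed

lemma Div_letters_closed: "Div G M \<Delta> \<union> m_inv G ` Div G M \<Delta> \<subseteq> carrier G"
  using Div_closed by auto

lemma wlen_lprod_le:
  assumes "set xs \<subseteq> Div G M \<Delta> \<union> m_inv G ` Div G M \<Delta>"
  shows "wlen G M \<Delta> (lprod G xs) \<le> length xs"
proof -
  let ?ys = "filter (\<lambda>x. x \<noteq> \<one>) xs"
  have "set ?ys \<subseteq> gens G M \<Delta> \<union> m_inv G ` gens G M \<Delta>"
    unfolding gens_def using assms Div_closed by (rule set_filter_one_subset)
  moreover have "lprod G ?ys = lprod G xs"
    using assms Div_closed by (intro lprod_filter_one) auto
  ultimately have "wlen G M \<Delta> (lprod G xs) \<le> length ?ys"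
    unfolding wlen_def by (intro Least_le) blast
  then show ?thesis
    using length_filter_le order_trans by blast
qed

lemma wlen_attained:
  assumes "x \<in> carrier G"
  obtains xs where "length xs = wlen G M \<Delta> x"
    "set xs \<subseteq> gens G M \<Delta> \<union> m_inv G ` gens G M \<Delta>" "lprod G xs = x"
proof -
  obtain xs where xs: "set xs \<subseteq> Div G M \<Delta> \<union> m_inv G ` Div G M \<Delta>" "lprod G xs = x"
    using generate_lprod[of x "Div G M \<Delta>"] generate_Div_Delta assms Div_closed by auto
  let ?ys = "filter (\<lambda>x. x \<noteq> \<one>) xs"
  have "set ?ys \<subseteq> gens G M \<Delta> \<union> m_inv G ` gens G M \<Delta>"
    unfolding gens_def using xs(1) Div_closed by (rule set_filter_one_subset)
  moreover have "lprod G ?ys = x"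
    using xs Div_closed by (subst lprod_filter_one) auto
  ultimately have "\<exists>n xs. length xs = n \<and> set xs \<subseteq> gens G M \<Delta> \<union> m_inv G ` gens G M \<Delta> \<and> lprod G xs = x"
    by blast
  from LeastI_ex[OF this] that show ?thesis
    unfolding wlen_def by blast
qed

lemma finite_gdist_sphere:
  assumes "a \<in> carrier G"
  shows "finite {b \<in> carrier G. gdist G M \<Delta> a b = n}"
proof -
  let ?W = "{xs. set xs \<subseteq> gens G M \<Delta> \<union> m_inv G ` gens G M \<Delta> \<and> length xs = n}"
  have "finite ?W"
    by (rule finite_lists_length_eq) (simp add: gens_def finite_Div_Delta)
  moreover have "{b \<in> carrier G. gdist G M \<Delta> a b = n} \<subseteq> (\<lambda>xs. a \<otimes> lprod G xs) ` ?W"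
  proof
    fix b assume "b \<in> {b \<in> carrier G. gdist G M \<Delta> a b = n}"
    then have b: "b \<in> carrier G" "wlen G M \<Delta> (inv a \<otimes> b) = n"
      by (auto simp: gdist_def)
    obtain xs where "length xs = n" "set xs \<subseteq> gens G M \<Delta> \<union> m_inv G ` gens G M \<Delta>"
      and xs: "lprod G xs = inv a \<otimes> b"
      using wlen_attained[of "inv a \<otimes> b"] assms b by auto
    then have "xs \<in> ?W"
      by blast
    moreover have "b = a \<otimes> lprod G xs"
      using assms b(1) xs by simp
    ultimately show "b \<in> (\<lambda>xs. a \<otimes> lprod G xs) ` ?W"
      by blast
  qed
  ultimately show ?thesis
    by (rule finite_surj)
qed

lemma Delta_mult_letter_in_M:
  assumes "s \<in> Div G M \<Delta> \<union> m_inv G ` Div G M \<Delta>"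
  shows "\<Delta> \<otimes> s \<in> M"
  using assms Div_subset_M Div_iff_right[OF Delta_balanced] by auto

lemma Delta_pow_length_mult_lprod_in_M:
  "set xs \<subseteq> Div G M \<Delta> \<union> m_inv G ` Div G M \<Delta> \<Longrightarrow> \<Delta> [^] length xs \<otimes> lprod G xs \<in> M"
proof (induction xs)
  case (Cons s xs)
  let ?n = "length xs"
  have "s \<in> carrier G" "set xs \<subseteq> carrier G"
    using Cons.prems Div_letters_closed by auto
  then have "\<Delta> [^] length (s # xs) \<otimes> lprod G (s # xs)
      = (\<Delta> [^] ?n \<otimes> (\<Delta> \<otimes> s) \<otimes> inv (\<Delta> [^] ?n)) \<otimes> (\<Delta> [^] ?n \<otimes> lprod G xs)"
    by (simp add: m_assoc)
  with Cons M_conj_Delta_pow Delta_mult_letter_in_M show ?case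
    by simp
qed simp

lemma Delta_pow_mult_in_M_if_wlen_le:
  assumes "x \<in> carrier G" "wlen G M \<Delta> x \<le> n"
  shows "\<Delta> [^] n \<otimes> x \<in> M"
proof -
  let ?w = "wlen G M \<Delta> x"
  obtain xs where xs: "length xs = ?w"
    "set xs \<subseteq> gens G M \<Delta> \<union> m_inv G ` gens G M \<Delta>" "lprod G xs = x"
    using wlen_attained[OF assms(1)] .
  then have "set xs \<subseteq> Div G M \<Delta> \<union> m_inv G ` Div G M \<Delta>"
    by (auto simp: gens_def)
  then have "\<Delta> [^] ?w \<otimes> x \<in> M"
    using Delta_pow_length_mult_lprod_in_M xs by metis
  then have "\<Delta> [^] (n - ?w) \<otimes> (\<Delta> [^] ?w \<otimes> x) \<in> M"
    by simp
  also have "\<Delta> [^] (n - ?w) \<otimes> (\<Delta> [^] ?w \<otimes> x) = \<Delta> [^] n \<otimes> x"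
    using assms by (simp add: nat_pow_mult m_assoc [symmetric])
  finally show ?thesis .
qed

lemma omega_i_in_Div_Delta:
  assumes "\<omega> \<in> Div G M \<Delta>" "1 \<le> i"
  shows "omega_i G \<Delta> \<omega> i \<in> Div G M \<Delta>"
proof -
  obtain j where "i = Suc j"
    using assms(2) by (metis Suc_le_D One_nat_def)
  then show ?thesis
    using omega_i_Suc Div_Delta_conj_inv_Delta_pow[OF assms(1)] by simp
qed

lemma gdist_dk_one_le:
  assumes "\<omega> \<in> Div G M \<Delta>"
  shows "gdist G M \<Delta> (dk G \<Delta> \<omega> k) \<one> \<le> k"
proof -
  let ?ws = "map (omega_i G \<Delta> \<omega>) [1..<k + 1]"
  have ws: "set ?ws \<subseteq> Div G M \<Delta>"
    using omega_i_in_Div_Delta[OF assms] by auto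
  then have "set ?ws \<subseteq> carrier G"
    using Div_closed by blast
  then have "gdist G M \<Delta> (dk G \<Delta> \<omega> k) \<one> = wlen G M \<Delta> (inv (lprod G ?ws))"
    by (simp add: gdist_def dk_def)
  also have "\<dots> = wlen G M \<Delta> (lprod G (rev (map (m_inv G) ?ws)))"
    using \<open>set ?ws \<subseteq> carrier G\<close> by (simp only: inv_lprod)
  also have "\<dots> \<le> length (rev (map (m_inv G) ?ws))"
    using ws by (intro wlen_lprod_le) auto
  also have "\<dots> = k"
    by (simp del: upt_Suc)
  finally show ?thesis .
qed

end

locale parabolic_substructure = garside_structure +
  fixes H N :: "'a set" and \<delta> :: 'a
  assumes parabolic: "parabolic G M \<Delta> H N \<delta>"
begin

lemma delta_balanced: "balanced G M \<delta>"
  using parabolic unfolding parabolic_def by blast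

lemma delta_in_M [simp]: "\<delta> \<in> M"
  using parabolic unfolding parabolic_def by blast

lemma delta_closed [simp]: "\<delta> \<in> carrier G"
  by simp

lemma H_eq: "H = generate G (Div G M \<delta>)"
  using parabolic unfolding parabolic_def by blast

lemma N_eq: "N = mgen G (Div G M \<delta>)"
  using parabolic unfolding parabolic_def by blast

lemma Div_delta_eq: "Div G M \<delta> = Div G M \<Delta> \<inter> N"
  using parabolic unfolding parabolic_def by blast

lemma N_subset_M: "N \<subseteq> M"
  using N_eq mgen_Div_subset_M by simp

lemma N_subset_carrier: "N \<subseteq> carrier G"
  using N_subset_M M_subset_carrier by blast

lemma N_closed [simp]: "x \<in> N \<Longrightarrow> x \<in> carrier G"
  using N_subset_carrier by blast

lemma Div_delta_subset_N: "Div G M \<delta> \<subseteq> N"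
  using N_eq by (auto intro: mgen.incl)

lemma mult_in_N [simp]: "x \<in> N \<Longrightarrow> y \<in> N \<Longrightarrow> x \<otimes> y \<in> N"
  using N_eq by (simp add: mgen.mult)

lemma delta_in_Div_delta: "\<delta> \<in> Div G M \<delta>"
  by (simp add: self_in_Div)

lemma delta_in_Div_Delta: "\<delta> \<in> Div G M \<Delta>"
  using delta_in_Div_delta Div_delta_eq by auto

lemma delta_pow_in_N: "\<delta> [^] (n::nat) \<in> N"
proof (induction n)
  case 0
  show ?case using N_eq by (simp add: mgen.one)
next
  case (Suc n)
  then show ?case
    using delta_in_Div_delta Div_delta_subset_N by auto
qed

lemma H_subgroup: "subgroup H G"
  using H_eq generate_is_subgroup[OF Div_closed] by simp

lemma N_subset_H: "N \<subseteq> H"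
proof -
  have "is_submonoid G H"
    using subgroup.subset[OF H_subgroup] subgroup.one_closed[OF H_subgroup]
      subgroup.m_closed[OF H_subgroup] by (simp add: is_submonoid_def)
  then show ?thesis
    unfolding N_eq H_eq by (rule mgen_minimal) (auto intro: generate.incl)
qed

lemma N_conj_delta_pow: "x \<in> N \<Longrightarrow> \<delta> [^] (n::nat) \<otimes> x \<otimes> inv (\<delta> [^] n) \<in> N"
proof -
  have "\<And>x. x \<in> N \<Longrightarrow> \<delta> \<otimes> x \<otimes> inv \<delta> \<in> N"
    using mgen_Div_conj[OF delta_balanced] unfolding N_eq .
  then show "x \<in> N \<Longrightarrow> ?thesis"
    by (rule conj_pow_closed[OF N_subset_carrier delta_closed])
qed

lemma H_elem_decomposition:
  assumes "g \<in> H"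
  obtains p :: nat and b where "b \<in> N" "g = inv (\<delta> [^] p) \<otimes> b"
proof -
  from assms have "g \<in> generate G (Div G M \<delta>)"
    using H_eq by simp
  then have "\<exists>p::nat. \<exists>b\<in>N. g = inv (\<delta> [^] p) \<otimes> b"
  proof (induction rule: generate.induct)
    case one
    show ?case
      using N_eq by (intro exI[of _ 0] bexI[of _ "\<one>"]) (simp_all add: mgen.one)
  next
    case (incl h)
    then show ?case
      using Div_delta_subset_N by (intro exI[of _ 0] bexI[of _ h]) auto
  next
    case (inv h)
    then have "\<delta> \<otimes> inv h \<in> N" "h \<in> carrier G"
      using Div_right_complement[OF delta_balanced] Div_delta_subset_N Div_closed by auto
    then show ?case
      by (intro exI[of _ 1] bexI[of _ "\<delta> \<otimes> inv h"]) simp_all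
  next
    case (eng g1 g2)
    obtain p1 :: nat and b1 where b1: "b1 \<in> N" "g1 = inv (\<delta> [^] p1) \<otimes> b1"
      using eng.IH(1) by blast
    obtain p2 :: nat and b2 where b2: "b2 \<in> N" "g2 = inv (\<delta> [^] p2) \<otimes> b2"
      using eng.IH(2) by blast
    have "(\<delta> [^] p2 \<otimes> b1 \<otimes> inv (\<delta> [^] p2)) \<otimes> b2 \<in> N"
      using N_conj_delta_pow[OF b1(1)] b2(1) by simp
    moreover have "g1 \<otimes> g2 = inv (\<delta> [^] (p2 + p1)) \<otimes> ((\<delta> [^] p2 \<otimes> b1 \<otimes> inv (\<delta> [^] p2)) \<otimes> b2)"
      using b1 b2 by (simp add: nat_pow_mult [symmetric] inv_mult_group m_assoc)
    ultimately show ?case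
      by blast
  qed
  with that show ?thesis
    by blast
qed

(* Induction along a factorisation of b into divisors of \<delta>: for b = s b', the join of c
   and s again lies in N, and it divides \<Delta>, so it is a divisor of \<delta>. *)
lemma le_delta_if_le_Delta_and_N:
  assumes "b \<in> N" "c \<in> carrier G" "c \<preceq> \<Delta>" "c \<preceq> b"
  shows "c \<preceq> \<delta>"
proof -
  obtain xs where xs: "set xs \<subseteq> Div G M \<delta>" "lprod G xs = b"
    using mgen_lprod[of b "Div G M \<delta>"] assms(1) N_eq Div_closed by auto
  from xs(1) assms(2-4) show ?thesis
    unfolding xs(2)[symmetric]
  proof (induction xs arbitrary: c)
    case Nil
    then show ?case
      using left_le_trans[OF _ _ _ _ left_le_mult_right[of \<one> \<delta>]] by simp
  next
    case (Cons s xs)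
    let ?b = "lprod G xs"
    have s: "s \<in> Div G M \<delta>" and b: "?b \<in> N" "?b \<in> M"
      using Cons.prems(1) N_eq N_subset_M lprod_in_mgen by auto
    then have sN: "s \<in> N" and sM: "s \<in> M" and sD: "s \<preceq> \<Delta>"
      using Div_delta_subset_N Div_delta_eq Div_iff by auto
    obtain j where j: "j \<in> carrier G" "c \<preceq> j" "s \<preceq> j"
      and j_least: "\<And>c'. c' \<in> carrier G \<Longrightarrow> c \<preceq> c' \<Longrightarrow> s \<preceq> c' \<Longrightarrow> j \<preceq> c'"
      using join_exists[of c s] Cons.prems(2) sM by auto
    have "j \<preceq> \<Delta>"
      using j_least Cons.prems(3) sD by simp
    moreover have "j \<preceq> s \<otimes> ?b"
      using j_least Cons.prems(4) left_le_mult_right sM b by simp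
    ultimately obtain z where z: "z \<in> carrier G" "z \<preceq> \<Delta>" "z \<preceq> ?b" "j \<preceq> s \<otimes> z"
      using le_mult_through_Delta_divisor[OF sM b(2) j(1)] by blast
    have "z \<preceq> \<delta>"
      using Cons.IH Cons.prems(1) z(1-3) by simp
    define q where "q = inv s \<otimes> j"
    have q: "q \<in> M" "s \<otimes> q = j"
      using j(1,3) sM by (simp_all add: q_def leL_def)
    then have "q \<preceq> z"
      using left_le_cancel[of s q z] z(1,4) sM by simp
    then have "q \<in> Div G M \<delta>"
      using left_le_trans[OF _ z(1) delta_closed _ \<open>z \<preceq> \<delta>\<close>] q(1) by (simp add: Div_iff)
    then have "j \<in> N"
      using q(2) sN Div_delta_subset_N mult_in_N by blast
    with \<open>j \<preceq> \<Delta>\<close> have "j \<in> Div G M \<delta>"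
      using N_subset_M by (auto simp: Div_delta_eq Div_iff)
    then show ?case
      using left_le_trans[OF Cons.prems(2) j(1) delta_closed j(2)] by (simp add: Div_iff)
  qed
qed

lemma Delta_le_mult_N_imp_le_mult_delta:
  assumes "x \<in> M" "b \<in> N" "\<Delta> \<preceq> x \<otimes> b"
  shows "\<Delta> \<preceq> x \<otimes> \<delta>"
proof -
  have "b \<in> M"
    using assms(2) N_subset_M by blast
  then obtain z where z: "z \<in> carrier G" "z \<preceq> \<Delta>" "z \<preceq> b" "\<Delta> \<preceq> x \<otimes> z"
    using le_mult_through_Delta_divisor[OF assms(1) _ Delta_closed left_le_refl[OF Delta_closed]
        assms(3)] by blast
  then have "x \<otimes> z \<preceq> x \<otimes> \<delta>"
    using le_delta_if_le_Delta_and_N[OF assms(2) z(1-3)] left_le_cancel[of x z \<delta>] assms(1)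
    by simp
  then show ?thesis
    using left_le_trans[OF Delta_closed _ _ z(4)] z(1) assms(1) by simp
qed

lemma Delta_not_le_N:
  assumes "H \<noteq> carrier G" "b \<in> N"
  shows "\<not> \<Delta> \<preceq> b"
proof
  assume "\<Delta> \<preceq> b"
  then have Delta_le_delta: "\<Delta> \<preceq> \<delta>"
    using le_delta_if_le_Delta_and_N[OF assms(2) Delta_closed left_le_refl] by simp
  have "Div G M \<Delta> \<subseteq> Div G M \<delta>"
  proof
    fix t assume "t \<in> Div G M \<Delta>"
    then have "t \<in> M" "t \<preceq> \<Delta>"
      by (simp_all add: Div_iff)
    then show "t \<in> Div G M \<delta>"
      using left_le_trans[OF _ Delta_closed delta_closed _ Delta_le_delta] by (simp add: Div_iff)
  qed
  then have "carrier G \<subseteq> H"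
    using mono_generate generate_Div_Delta H_eq by metis
  with assms(1) subgroup.subset[OF H_subgroup] show False
    by blast
qed

lemma delta_ne_one:
  assumes "H \<noteq> {\<one>}"
  shows "\<delta> \<noteq> \<one>"
proof
  assume delta_one: "\<delta> = \<one>"
  have "Div G M \<delta> \<subseteq> {\<one>}"
  proof
    fix t assume "t \<in> Div G M \<delta>"
    then have "t \<in> M" "inv t \<in> M"
      using delta_one by (auto simp: Div_iff leL_def)
    then show "t \<in> {\<one>}"
      using inv_in_M_imp_one by simp
  qed
  then have "H \<subseteq> {\<one>}"
    using mono_generate generate_one H_eq by metis
  with assms subgroup.one_closed[OF H_subgroup] show False
    by blast
qed

lemma inv_Delta_pow_mult_H_notin_M:
  assumes "H \<noteq> carrier G" "g \<in> H" "1 \<le> j"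
  shows "inv (\<Delta> [^] (j::nat)) \<otimes> g \<notin> M"
proof
  assume m: "inv (\<Delta> [^] j) \<otimes> g \<in> M"
  obtain p :: nat and b where b: "b \<in> N" "g = inv (\<delta> [^] p) \<otimes> b"
    using H_elem_decomposition[OF assms(2)] .
  obtain i where "j = Suc i"
    using assms(3) not0_implies_Suc by fastforce
  then have "inv (\<Delta> [^] j) = inv (\<Delta> [^] i) \<otimes> inv \<Delta>"
    by (metis Delta_closed inv_mult_group nat_pow_Suc2 nat_pow_closed)
  then have "inv \<Delta> \<otimes> b = (inv \<Delta> \<otimes> \<delta> [^] p \<otimes> \<Delta>) \<otimes> \<Delta> [^] i \<otimes> (inv (\<Delta> [^] j) \<otimes> g)"
    using b by (simp add: m_assoc)
  moreover have "inv \<Delta> \<otimes> \<delta> [^] p \<otimes> \<Delta> \<in> M"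
    using M_conj_inv_Delta by simp
  ultimately have "\<Delta> \<preceq> b"
    using m by (simp add: leL_def)
  with Delta_not_le_N[OF assms(1) b(1)] show False
    by contradiction
qed

lemma Delta_pow_mult_inv_delta_pow_notin_M:
  assumes "\<delta> \<noteq> \<one>"
  shows "\<Delta> [^] (j::nat) \<otimes> inv (\<delta> [^] Suc j) \<notin> M"
proof (induction j)
  case 0
  show ?case
    using inv_in_M_imp_one[OF delta_in_M] assms by auto
next
  case (Suc j)
  show ?case
  proof
    let ?z = "\<Delta> [^] Suc j \<otimes> inv (\<delta> [^] Suc (Suc j))"
    assume z: "?z \<in> M"
    have "\<Delta> \<preceq> \<Delta> [^] j \<otimes> \<Delta>"
      using Delta_le_mult_Delta by simp
    also have "\<Delta> [^] j \<otimes> \<Delta> = ?z \<otimes> \<delta> [^] Suc (Suc j)"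
      by (simp add: m_assoc)
    finally have "\<Delta> \<preceq> ?z \<otimes> \<delta> [^] Suc (Suc j)" .
    then have "\<Delta> \<preceq> ?z \<otimes> \<delta>"
      by (rule Delta_le_mult_N_imp_le_mult_delta[OF z delta_pow_in_N])
    moreover have "inv \<Delta> \<otimes> (?z \<otimes> \<delta>) = \<Delta> [^] j \<otimes> inv (\<delta> [^] Suc j)"
      unfolding nat_pow_Suc2[OF Delta_closed] nat_pow_Suc2[OF delta_closed]
      by (simp add: inv_mult_group m_assoc)
    ultimately show False
      using Suc.IH by (simp add: leL_def)
  qed
qed

lemma dk_delta_eq: "dk G \<Delta> (inv \<delta> \<otimes> \<Delta>) k = inv (\<delta> [^] k) \<otimes> \<Delta> [^] k"
  using dk_eq[of \<Delta> "inv \<delta> \<otimes> \<Delta>" k] by (simp add: m_assoc nat_pow_inv)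

lemma inv_delta_mult_Delta_in_Div: "inv \<delta> \<otimes> \<Delta> \<in> Div G M \<Delta>"
  by (rule Div_left_complement[OF Delta_balanced delta_in_Div_Delta])

lemma gdist_dk_H_ge:
  assumes "H \<noteq> carrier G" "b \<in> H"
  shows "k \<le> gdist G M \<Delta> (dk G \<Delta> (inv \<delta> \<otimes> \<Delta>) k) b"
proof (rule ccontr)
  let ?w = "gdist G M \<Delta> (dk G \<Delta> (inv \<delta> \<otimes> \<Delta>) k) b"
  assume "\<not> k \<le> ?w"
  have b: "b \<in> carrier G"
    using assms(2) subgroup.mem_carrier[OF H_subgroup] by blast
  have "?w = wlen G M \<Delta> (inv (\<Delta> [^] k) \<otimes> \<delta> [^] k \<otimes> b)"
    by (simp add: gdist_def dk_delta_eq inv_mult_group)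
  then have "\<Delta> [^] ?w \<otimes> (inv (\<Delta> [^] k) \<otimes> \<delta> [^] k \<otimes> b) \<in> M"
    using Delta_pow_mult_in_M_if_wlen_le b by simp
  also have "\<Delta> [^] ?w \<otimes> (inv (\<Delta> [^] k) \<otimes> \<delta> [^] k \<otimes> b) = inv (\<Delta> [^] (k - ?w)) \<otimes> (\<delta> [^] k \<otimes> b)"
  proof -
    have "\<Delta> [^] k = \<Delta> [^] (k - ?w) \<otimes> \<Delta> [^] ?w"
      using \<open>\<not> k \<le> ?w\<close> by (simp add: nat_pow_mult)
    then show ?thesis
      using b by (simp add: inv_mult_group m_assoc)
  qed
  finally have "inv (\<Delta> [^] (k - ?w)) \<otimes> (\<delta> [^] k \<otimes> b) \<in> M" .
  moreover have "\<delta> [^] k \<otimes> b \<in> H"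
    using assms(2) delta_pow_in_N N_subset_H subgroup.m_closed[OF H_subgroup] by blast
  moreover have "1 \<le> k - ?w"
    using \<open>\<not> k \<le> ?w\<close> by simp
  ultimately show False
    using inv_Delta_pow_mult_H_notin_M[OF assms(1)] by blast
qed

lemma gdist_dk_inv_delta_pow_le:
  "gdist G M \<Delta> (dk G \<Delta> (inv \<delta> \<otimes> \<Delta>) k) (inv (\<delta> [^] k)) \<le> k"
proof -
  have "inv (dk G \<Delta> (inv \<delta> \<otimes> \<Delta>) k) \<otimes> inv (\<delta> [^] k) = lprod G (replicate k (inv \<Delta>))"
    by (simp add: dk_delta_eq inv_mult_group m_assoc lprod_replicate nat_pow_inv)
  moreover have "set (replicate k (inv \<Delta>)) \<subseteq> Div G M \<Delta> \<union> m_inv G ` Div G M \<Delta>"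
    using self_in_Div[OF Delta_in_M] by auto
  ultimately show ?thesis
    unfolding gdist_def using wlen_lprod_le by (metis length_replicate)
qed

lemma gdist_one_inv_delta_pow_ge:
  assumes "\<delta> \<noteq> \<one>"
  shows "k \<le> gdist G M \<Delta> \<one> (inv (\<delta> [^] k))"
proof (rule ccontr)
  assume "\<not> ?thesis"
  then obtain j where j: "k = Suc j" "wlen G M \<Delta> (inv (\<delta> [^] k)) \<le> j"
    by (cases k) (auto simp: gdist_def)
  then have "\<Delta> [^] j \<otimes> inv (\<delta> [^] Suc j) \<in> M"
    using Delta_pow_mult_in_M_if_wlen_le by simp
  with Delta_pow_mult_inv_delta_pow_notin_M[OF assms] show False
    by contradiction
qed

theorem diam_proj_dk_ge:
  assumes "H \<noteq> carrier G" "H \<noteq> {\<one>}"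
  shows "k \<le> diam G M \<Delta> (proj G M \<Delta> H (dk G \<Delta> (inv \<delta> \<otimes> \<Delta>) k))"
proof -
  let ?a = "dk G \<Delta> (inv \<delta> \<otimes> \<Delta>) k"
  let ?P = "proj G M \<Delta> H ?a"
  have far: "\<And>b. b \<in> H \<Longrightarrow> k \<le> gdist G M \<Delta> ?a b"
    using gdist_dk_H_ge[OF assms(1)] .
  have one_in_H: "\<one> \<in> H" and inv_delta_pow_in_H: "inv (\<delta> [^] k) \<in> H"
    using subgroup.one_closed[OF H_subgroup] subgroup.m_inv_closed[OF H_subgroup]
      N_subset_H delta_pow_in_N by auto
  have dist_one: "gdist G M \<Delta> ?a \<one> = k"
    using gdist_dk_one_le[OF inv_delta_mult_Delta_in_Div] far[OF one_in_H] by (rule antisym)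
  have dist_inv_delta_pow: "gdist G M \<Delta> ?a (inv (\<delta> [^] k)) = k"
    using gdist_dk_inv_delta_pow_le far[OF inv_delta_pow_in_H] by (rule antisym)
  have setdist: "setdist G M \<Delta> ?a H = k"
    using one_in_H dist_one far by (rule setdist_eqI)
  have "\<one> \<in> ?P" "inv (\<delta> [^] k) \<in> ?P"
    using one_in_H inv_delta_pow_in_H dist_one dist_inv_delta_pow setdist
    by (simp_all add: proj_def)
  moreover have "finite ?P"
  proof (rule finite_subset)
    show "?P \<subseteq> {b \<in> carrier G. gdist G M \<Delta> ?a b = k}"
      using setdist subgroup.subset[OF H_subgroup] by (auto simp: proj_def)
    show "finite {b \<in> carrier G. gdist G M \<Delta> ?a b = k}"
      by (rule finite_gdist_sphere) (simp add: dk_delta_eq)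
  qed
  ultimately have "gdist G M \<Delta> \<one> (inv (\<delta> [^] k)) \<le> diam G M \<Delta> ?P"
    by (intro gdist_le_diam)
  with gdist_one_inv_delta_pow_ge[OF delta_ne_one[OF assms(2)]] show ?thesis
    by (rule order_trans)
qed

end

theorem lemma5p3:
  fixes G :: "('a, 'b) monoid_scheme" and M H N :: "'a set" and \<Delta> \<delta> :: 'a and k :: nat
  assumes "garside G M \<Delta>"
    and "parabolic G M \<Delta> H N \<delta>"
    and "H \<noteq> carrier G" and "H \<noteq> {\<one>\<^bsub>G\<^esub>}"
    and "k \<ge> 1"
  shows "diam G M \<Delta> (proj G M \<Delta> H (dk G \<Delta> (inv\<^bsub>G\<^esub> \<delta> \<otimes>\<^bsub>G\<^esub> \<Delta>) k)) \<ge> k"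
proof -
  have "group G"
    using assms(1) by (simp add: garside_def)
  then interpret parabolic_substructure G M \<Delta> H N \<delta>
    using assms(1,2) by (intro parabolic_substructure.intro garside_structure.intro
        parabolic_substructure_axioms.intro garside_structure_axioms.intro)
  show ?thesis
    using diam_proj_dk_ge[OF assms(3,4)] by simp
qed

end
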